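(* Let $(\Omega,\mathcal F,\mathbb P)$ be a probability space carrying a group of measurable bijections $\{\theta_n\}_{n\in\mathbb Z}$ each preserving $\mathbb P$, and let $\{a_n\}_{n\in\mathbb Z}$ be i.i.d. flow-compatible random variables with values in $\{1,2,\dots\}$, with $\mathbb E[a_0]<\infty$ and $\mathbb P[a_0=1]\in(0,1)$. Let $f(n)=n+a_n$, and let $\Phi^s,\Phi^e,\lambda^s,\lambda^e,\tilde D^e(\cdot),L(\cdot),n^{(d)},n^{(l)}$ be as in the context. Then for every measurable diagonally invariant function $g:\Omega\times\mathbb Z\times\mathbb Z\to[0,\infty)$, $$\lambda^s\,\mathbb E^s\Big[\sum_{n\in\tilde D^e(0)}g(0,n)\Big]=\lambda^s\,\mathbb E^s[g(0,0)]+\lambda^e\,\mathbb E^e[g(n^{(d)},0)]$$ and $$\lambda^s\,\mathbb E^s\Big[\sum_{n\in L(0)}g(0,n)\Big]=\lambda^s\,\mathbb E^s[g(0,0)]+\lambda^e\,\mathbb E^e[g(n^{(l)},0)],$$ where $g(m,n)$ stands for $g(\omega,m,n)$.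
   Context: $f^j$ is the $j$-th iterate of $f$ ($f^0$ the identity). Descendants: $D(n)=\{m:\exists\,j\ge0,\ f^j(m)=n\}$; $n$ is successful if $D(n)$ is infinite, ephemeral otherwise; $\Phi^s,\Phi^e$ are the sets of successful and ephemeral integers, with intensities $\lambda^s=\mathbb P[0\in\Phi^s]$, $\lambda^e=\mathbb P[0\in\Phi^e]$; $\mathbb E^s,\mathbb E^e$ are expectations under $\mathbb P[\cdot\mid0\in\Phi^s]$, $\mathbb P[\cdot\mid 0\in\Phi^e]$. For $n\in\Phi^s$, the direct ephemeral descendants of $n$ are $D^e(n)=\{m\in D(n)\cap\Phi^e:\ f^k(m)=n \text{ for the smallest } k>0 \text{ with } f^k(m)\in\Phi^s\}$, and $\tilde D^e(n)=D^e(n)\cup\{n\}$. The cousins (of all degrees) of $n$ are $L(n)=\{m\in\mathbb Z:\exists\,j\ge0,\ f^j(m)=f^j(n)\}$. On $\{0\in\Phi^e\}$, $n^{(d)}$ denotes the (a.s. unique) successful integer with $0\in\tilde D^e(n^{(d)})$ and $n^{(l)}$ the (a.s. unique) successful integer with $0\in L(n^{(l)})$. A function $g$ is diagonally invariant if $g(\theta_k\omega,m,n)=g(\omega,m+k,n+k)$ for all $k,m,n\in\mathbb Z$. *)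

theory Defs
  imports "HOL-Probability.Probability"
begin

definition jump_map :: "(int \<Rightarrow> 'w \<Rightarrow> nat) \<Rightarrow> 'w \<Rightarrow> int \<Rightarrow> int" where
  "jump_map a w = (\<lambda>n. n + int (a n w))"

definition desc :: "(int \<Rightarrow> int) \<Rightarrow> int \<Rightarrow> int set" where
  "desc f n = {m. \<exists>j. (f ^^ j) m = n}"

definition successful :: "(int \<Rightarrow> int) \<Rightarrow> int set" where
  "successful f = {n. infinite (desc f n)}"

definition ephemeral :: "(int \<Rightarrow> int) \<Rightarrow> int set" where
  "ephemeral f = {n. finite (desc f n)}"

definition dir_eph :: "(int \<Rightarrow> int) \<Rightarrow> int \<Rightarrow> int set" where
  "dir_eph f n = {m \<in> desc f n \<inter> ephemeral f.
      (f ^^ (LEAST k. 0 < k \<and> (f ^^ k) m \<in> successful f)) m = n}"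

definition dir_eph_tilde :: "(int \<Rightarrow> int) \<Rightarrow> int \<Rightarrow> int set" where
  "dir_eph_tilde f n = insert n (dir_eph f n)"

definition cousins :: "(int \<Rightarrow> int) \<Rightarrow> int \<Rightarrow> int set" where
  "cousins f n = {m. \<exists>j. (f ^^ j) m = (f ^^ j) n}"

text \<open>n^(d) and n^(l) (a.s. unique, hence defined via THE).\<close>
definition n_d :: "(int \<Rightarrow> int) \<Rightarrow> int" where
  "n_d f = (THE n. n \<in> successful f \<and> 0 \<in> dir_eph_tilde f n)"

definition n_l :: "(int \<Rightarrow> int) \<Rightarrow> int" where
  "n_l f = (THE n. n \<in> successful f \<and> 0 \<in> cousins f n)"

definition cond_nn_exp :: "'w measure \<Rightarrow> 'w set \<Rightarrow> ('w \<Rightarrow> ennreal) \<Rightarrow> ennreal" where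
  "cond_nn_exp M A X = (\<integral>\<^sup>+ w. X w * indicator A w \<partial>M) / emeasure M A"

end

theory Submission
  imports Defs
begin

text \<open>Call x a cut point if no integer below x jumps over it, i.e. f y \<le> x for all y < x.
  Every y \<le> x then lies in D(x), so cut points are successful, and the orbit of a cut point passes
  through every successful integer above it. Since the a_n are independent with finite mean and
  P[a_0 = 1] > 0, each integer is a cut point with probability bounded away from 0, and Kolmogorov's
  zero-one law gives almost surely infinitely many cut points in both directions. Consequently, if 0
  is ephemeral there is exactly one successful m with 0 in tilde D^e(m), namely n^(d), and exactly
  one with 0 in L(m), namely n^(l); if 0 is successful that m is 0 itself. Both identities are then
  the mass transport principle for the diagonally invariant transport in which every successful m
  sends mass g(m, n) to each n in tilde D^e(m), respectively L(m).\<close>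

section \<open>Cut points of a strictly increasing map\<close>

definition cut_point :: "(int \<Rightarrow> int) \<Rightarrow> int \<Rightarrow> bool" where
  "cut_point f x \<longleftrightarrow> (\<forall>y<x. f y \<le> x)"

locale forward_map =
  fixes f :: "int \<Rightarrow> int"
  assumes less_map: "\<And>n. n < f n"
begin

lemma funpow_ge: "m + int j \<le> (f ^^ j) m"
proof (induction j)
  case (Suc j)
  then show ?case using less_map[of "(f ^^ j) m"] by simp
qed simp

lemma strict_mono_orbit: "strict_mono (\<lambda>j. (f ^^ j) m)"
  by (simp add: strict_mono_Suc_iff less_map)

lemma orbit_less_iff: "(f ^^ i) m < (f ^^ j) m \<longleftrightarrow> i < j"
  using strict_mono_less[OF strict_mono_orbit] .

lemma orbit_eq_iff: "(f ^^ i) m = (f ^^ j) m \<longleftrightarrow> i = j"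
  using strict_mono_eq[OF strict_mono_orbit] .

lemma orbit_in_desc: "m \<in> desc f ((f ^^ j) m)"
  unfolding desc_def by auto

lemma self_in_desc: "n \<in> desc f n"
  using orbit_in_desc[of n 0] by simp

lemma desc_le:
  assumes "m \<in> desc f n"
  shows "m \<le> n"
proof -
  obtain j where "(f ^^ j) m = n"
    using assms by (auto simp: desc_def)
  then show ?thesis
    using funpow_ge[of m j] by linarith
qed

lemma desc_trans:
  assumes "y \<in> desc f x" "x \<in> desc f z"
  shows "y \<in> desc f z"
proof -
  obtain i j where "(f ^^ i) y = x" "(f ^^ j) x = z"
    using assms by (auto simp: desc_def)
  then have "(f ^^ (j + i)) y = z"
    by (simp add: funpow_add)
  then show ?thesis
    by (auto simp: desc_def)
qed

lemma successful_iff_unbounded: "n \<in> successful f \<longleftrightarrow> (\<forall>N. \<exists>m\<in>desc f n. m < N)"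
proof
  assume "n \<in> successful f"
  show "\<forall>N. \<exists>m\<in>desc f n. m < N"
  proof
    fix N
    have "\<not> desc f n \<subseteq> {N..n}"
      using \<open>n \<in> successful f\<close> finite_subset by (auto simp: successful_def)
    then obtain m where "m \<in> desc f n" "m \<notin> {N..n}" by blast
    then show "\<exists>m\<in>desc f n. m < N" using desc_le by force
  qed
next
  assume unbounded: "\<forall>N. \<exists>m\<in>desc f n. m < N"
  show "n \<in> successful f"
  proof (unfold successful_def, intro CollectI notI)
    assume "finite (desc f n)"
    then show False
      using unbounded[rule_format, of "Min (desc f n)"] Min_le by (meson not_le)
  qed
qed

lemma successful_orbit: "n \<in> successful f \<Longrightarrow> (f ^^ j) n \<in> successful f"
  unfolding successful_iff_unbounded by (meson desc_trans orbit_in_desc)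

lemma cut_point_desc:
  assumes "cut_point f x" "y \<le> x"
  shows "y \<in> desc f x"
  using assms(2)
proof (induction "nat (x - y)" arbitrary: y rule: less_induct)
  case less
  show ?case
  proof (cases "y = x")
    case False
    then have "f y \<in> desc f x"
      using assms(1) less less_map[of y] by (auto simp: cut_point_def)
    then show ?thesis
      using desc_trans[OF orbit_in_desc[of y 1]] by simp
  qed (simp add: self_in_desc)
qed

lemma cut_point_successful:
  assumes "cut_point f x"
  shows "x \<in> successful f"
proof (unfold successful_iff_unbounded, intro allI)
  fix N :: int
  show "\<exists>m\<in>desc f x. m < N"
    using cut_point_desc[OF assms, of "min (N - 1) x"] by (intro bexI[of _ "min (N - 1) x"]) auto
qed

lemma cut_point_orbit_successful:
  assumes "cut_point f c" "m \<in> successful f" "c < m"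
  shows "\<exists>i. (f ^^ i) c = m"
proof -
  obtain y where "y \<in> desc f m" "y < c"
    using assms(2) unfolding successful_iff_unbounded by blast
  then obtain j j' where j: "(f ^^ j) y = m" and j': "(f ^^ j') y = c"
    using cut_point_desc[OF assms(1), of y] unfolding desc_def by auto
  then have "j' < j"
    using assms(3) orbit_less_iff[of j' y j] by simp
  have "(f ^^ (j - j')) c = (f ^^ (j - j' + j')) y"
    using j' by (simp add: funpow_add)
  also have "\<dots> = m"
    using \<open>j' < j\<close> j by simp
  finally show ?thesis by blast
qed

lemma cut_point_far_below:
  assumes below: "\<forall>N. \<exists>c<N. cut_point f c" and "cut_point f x"
  shows "\<exists>c j. cut_point f c \<and> k \<le> j \<and> (f ^^ j) c = x"
proof (induction k)
  case 0
  show ?case using assms(2) by (intro exI[of _ x] exI[of _ 0]) auto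
next
  case (Suc k)
  then obtain c j where c: "cut_point f c" "k \<le> j" "(f ^^ j) c = x" by blast
  obtain c' where c': "c' < c" "cut_point f c'" using below by blast
  then obtain i where i: "(f ^^ i) c' = c"
    using cut_point_desc[OF c(1), of c'] unfolding desc_def by auto
  then have "0 < i" using c'(1) by (cases i) auto
  moreover have "(f ^^ (j + i)) c' = x" using i c(3) by (simp add: funpow_add)
  ultimately show ?case using c'(2) c(2) by (intro exI[of _ c'] exI[of _ "j + i"]) auto
qed

lemma dir_eph_tilde_ancestor:
  assumes "cut_point f x" "0 < x"
  shows "m \<in> successful f \<and> 0 \<in> dir_eph_tilde f m \<longleftrightarrow> m = (if 0 \<in> successful f then 0 else n_d f)"
proof (cases "0 \<in> successful f")
  case True
  then show ?thesis by (auto simp: dir_eph_tilde_def dir_eph_def ephemeral_def successful_def)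
next
  case False
  define K where "K = (LEAST k. 0 < k \<and> (f ^^ k) 0 \<in> successful f)"
  text \<open>The orbit of 0 reaches the successful cut point x, so K is well defined.\<close>
  obtain k where k: "(f ^^ k) 0 = x"
    using cut_point_desc[OF assms(1), of 0] assms(2) unfolding desc_def by auto
  with assms False have "0 < k \<and> (f ^^ k) 0 \<in> successful f"
    using cut_point_successful by (cases k) auto
  then have K: "0 < K \<and> (f ^^ K) 0 \<in> successful f"
    unfolding K_def by (rule LeastI)
  have ancestor_iff: "m \<in> successful f \<and> 0 \<in> dir_eph_tilde f m \<longleftrightarrow> m = (f ^^ K) 0" for m
    using False K orbit_in_desc[of 0 K]
    by (auto simp: dir_eph_tilde_def dir_eph_def K_def ephemeral_def successful_def)
  then have "n_d f = (f ^^ K) 0"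
    unfolding n_d_def by blast
  then show ?thesis
    using False ancestor_iff by simp
qed

lemma cousins_successful_unique:
  assumes below: "\<forall>N. \<exists>c<N. cut_point f c"
    and m: "m \<in> successful f" "n \<in> cousins f m"
    and m': "m' \<in> successful f" "n \<in> cousins f m'"
  shows "m = m'"
proof -
  obtain j j' where j: "(f ^^ j) n = (f ^^ j) m" and j': "(f ^^ j') n = (f ^^ j') m'"
    using m(2) m'(2) by (auto simp: cousins_def)
  have "(f ^^ (j' + j)) m = (f ^^ j') ((f ^^ j) n)"
    using j by (simp add: funpow_add)
  also have "\<dots> = (f ^^ j) ((f ^^ j') n)"
    by (metis add.commute comp_apply funpow_add)
  also have "\<dots> = (f ^^ (j + j')) m'"
    using j' by (simp add: funpow_add)
  finally have meet: "(f ^^ (j' + j)) m = (f ^^ (j + j')) m'" .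
  obtain c where c: "c < min m m'" "cut_point f c" using below by blast
  obtain i i' where i: "(f ^^ i) c = m" and i': "(f ^^ i') c = m'"
    using cut_point_orbit_successful[OF c(2)] m(1) m'(1) c(1) by force
  have "(f ^^ (j' + j + i)) c = (f ^^ (j + j' + i')) c"
    using meet i i' by (simp add: funpow_add)
  then have "i = i'" by (simp add: orbit_eq_iff)
  then show ?thesis using i i' by simp
qed

lemma cousins_successful_exists:
  assumes "\<forall>N. \<exists>c<N. cut_point f c" "cut_point f x" "n < x"
  shows "\<exists>m\<in>successful f. n \<in> cousins f m"
proof -
  obtain k where k: "(f ^^ k) n = x"
    using cut_point_desc[OF assms(2), of n] assms(3) unfolding desc_def by auto
  obtain c j where c: "cut_point f c" "k \<le> j" "(f ^^ j) c = x"
    using cut_point_far_below[OF assms(1,2)] by blast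
  define m where "m = (f ^^ (j - k)) c"
  have "(f ^^ k) m = (f ^^ (k + (j - k))) c"
    by (simp add: m_def funpow_add)
  with c(2,3) k have "(f ^^ k) n = (f ^^ k) m"
    by simp
  then have "n \<in> cousins f m"
    unfolding cousins_def by blast
  moreover have "m \<in> successful f"
    unfolding m_def by (intro successful_orbit cut_point_successful c(1))
  ultimately show ?thesis by blast
qed

lemma cousins_ancestor:
  assumes "\<forall>N. \<exists>c<N. cut_point f c" "cut_point f x" "0 < x"
  shows "m \<in> successful f \<and> 0 \<in> cousins f m \<longleftrightarrow> m = (if 0 \<in> successful f then 0 else n_l f)"
proof -
  let ?P = "\<lambda>m. m \<in> successful f \<and> 0 \<in> cousins f m"
  have unique: "?P m' \<longleftrightarrow> m' = m0" if "?P m0" for m0 m'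
    using that cousins_successful_unique[OF assms(1), of m' 0 m0] by auto
  show ?thesis
  proof (cases "0 \<in> successful f")
    case True
    then have "?P 0" by (auto simp: cousins_def)
    with True show ?thesis using unique by simp
  next
    case False
    obtain m0 where "?P m0"
      using cousins_successful_exists[OF assms] by blast
    then have "n_l f = m0"
      unfolding n_l_def using unique by (intro the_equality) auto
    with False \<open>?P m0\<close> show ?thesis using unique by simp
  qed
qed

end

lemma prod_one_minus_eventually_bounded_below:
  fixes q :: "nat \<Rightarrow> real"
  assumes "summable q" "\<And>j. 0 \<le> q j" "\<And>j. q j < 1"
  shows "\<exists>\<delta>>0. \<forall>\<^sub>F J in sequentially. \<delta> \<le> (\<Prod>j<J. 1 - q j)"
proof -
  obtain N where N: "norm (\<Sum>i. q (i + N)) < 1/2"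
    using suminf_exist_split[OF _ assms(1), of "1/2"] by auto
  have tail: "(\<Sum>j\<in>{N..<J}. q j) \<le> 1/2" for J
  proof -
    have "(\<Sum>j\<in>{N..<J}. q j) = (\<Sum>i<J - N. q (i + N))"
      by (rule sum.reindex_bij_witness[where j="\<lambda>j. j - N" and i="\<lambda>i. i + N"]) auto
    also have "\<dots> \<le> (\<Sum>i. q (i + N))"
      using assms by (intro sum_le_suminf) (auto simp: summable_iff_shift)
    finally show ?thesis using N by simp
  qed
  define \<delta> where "\<delta> = (\<Prod>j<N. 1 - q j) / 2"
  have "\<delta> \<le> (\<Prod>j<J. 1 - q j)" if "N \<le> J" for J
  proof -
    have "1/2 \<le> (\<Prod>j\<in>{N..<J}. 1 - q j)"
      using Weierstrass_prod_ineq[of "{N..<J}" q] tail[of J] assms(2,3)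
      by (fastforce simp: less_imp_le)
    moreover have "0 \<le> (\<Prod>j<N. 1 - q j)"
      using assms(3) by (intro prod_nonneg) (simp add: less_imp_le)
    ultimately have "(\<Prod>j<N. 1 - q j) * (1/2) \<le> (\<Prod>j<N. 1 - q j) * (\<Prod>j\<in>{N..<J}. 1 - q j)"
      by (rule mult_left_mono)
    then have "\<delta> \<le> (\<Prod>j<N. 1 - q j) * (\<Prod>j\<in>{N..<J}. 1 - q j)"
      by (simp add: \<delta>_def)
    also have "\<dots> = (\<Prod>j<J. 1 - q j)"
      using that by (simp add: atLeast0LessThan[symmetric] prod.atLeastLessThan_concat)
    finally show ?thesis .
  qed
  moreover have "0 < \<delta>"
    using assms(3) by (simp add: \<delta>_def prod_pos)
  ultimately show ?thesis
    unfolding eventually_sequentially by blast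
qed

lemma borel_measurable_nn_integral_count_space_int:
  fixes H :: "'w \<Rightarrow> int \<Rightarrow> ennreal"
  assumes "\<And>m. (\<lambda>w. H w m) \<in> borel_measurable M"
  shows "(\<lambda>w. \<integral>\<^sup>+m. H w m \<partial>count_space UNIV) \<in> borel_measurable M"
proof -
  have "(\<lambda>w. \<integral>\<^sup>+m. H w m \<partial>count_space UNIV) = (\<lambda>w. \<Sum>i. H w (int_decode i))"
    by (rule ext, subst nn_integral_bij_count_space[OF bij_int_decode, symmetric])
      (simp add: nn_integral_count_space_nat)
  also have "\<dots> \<in> borel_measurable M"
    using assms by measurable
  finally show ?thesis .
qed

lemma mass_transport:
  fixes h :: "'w \<Rightarrow> int \<Rightarrow> int \<Rightarrow> ennreal" and \<theta> :: "int \<Rightarrow> 'w \<Rightarrow> 'w"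
  assumes theta_meas: "\<And>n. \<theta> n \<in> measurable M M"
    and theta_pres: "\<And>n. distr M M (\<theta> n) = M"
    and h_meas: "\<And>m n. (\<lambda>w. h w m n) \<in> borel_measurable M"
    and h_diag: "\<And>k m n w. w \<in> space M \<Longrightarrow> h (\<theta> k w) m n = h w (m + k) (n + k)"
  shows "(\<integral>\<^sup>+w. (\<integral>\<^sup>+n. h w 0 n \<partial>count_space UNIV) \<partial>M)
    = (\<integral>\<^sup>+w. (\<integral>\<^sup>+m. h w m 0 \<partial>count_space UNIV) \<partial>M)"
proof -
  have shift: "(\<integral>\<^sup>+w. h w 0 n \<partial>M) = (\<integral>\<^sup>+w. h w (-n) 0 \<partial>M)" for n
  proof -
    have "(\<integral>\<^sup>+w. h w (-n) 0 \<partial>M) = (\<integral>\<^sup>+w. h w (-n) 0 \<partial>distr M M (\<theta> n))"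
      by (simp add: theta_pres)
    also have "\<dots> = (\<integral>\<^sup>+w. h (\<theta> n w) (-n) 0 \<partial>M)"
      by (rule nn_integral_distr[OF theta_meas]) (simp add: theta_pres h_meas)
    also have "\<dots> = (\<integral>\<^sup>+w. h w 0 n \<partial>M)"
      by (rule nn_integral_cong) (simp add: h_diag)
    finally show ?thesis by simp
  qed
  have "(\<integral>\<^sup>+w. (\<integral>\<^sup>+n. h w 0 n \<partial>count_space UNIV) \<partial>M) = (\<integral>\<^sup>+n. (\<integral>\<^sup>+w. h w 0 n \<partial>M) \<partial>count_space UNIV)"
    by (rule nn_integral_count_space_nn_integral) (auto simp: h_meas)
  also have "\<dots> = (\<integral>\<^sup>+n. (\<integral>\<^sup>+w. h w (-n) 0 \<partial>M) \<partial>count_space UNIV)"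
    by (simp add: shift)
  also have "\<dots> = (\<integral>\<^sup>+m. (\<integral>\<^sup>+w. h w m 0 \<partial>M) \<partial>count_space UNIV)"
    by (rule nn_integral_bij_count_space) (auto intro: bij_betwI[of _ _ _ uminus])
  also have "\<dots> = (\<integral>\<^sup>+w. (\<integral>\<^sup>+m. h w m 0 \<partial>count_space UNIV) \<partial>M)"
    by (rule nn_integral_count_space_nn_integral[symmetric]) (auto simp: h_meas)
  finally show ?thesis .
qed

lemma emeasure_mult_cond_nn_exp:
  assumes "finite_measure M" "A \<in> sets M"
  shows "emeasure M A * cond_nn_exp M A X = (\<integral>\<^sup>+w. X w * indicator A w \<partial>M)"
proof (cases "emeasure M A = 0")
  case True
  then have "AE w in M. w \<notin> A"
    using assms(2) by (intro AE_I[where N=A]) auto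
  then have "(\<integral>\<^sup>+w. X w * indicator A w \<partial>M) = 0"
    by (subst nn_integral_cong_AE[where v="\<lambda>_. 0"]) (auto elim!: eventually_mono)
  then show ?thesis using True by simp
next
  case False
  moreover have "emeasure M A \<noteq> \<top>"
    using assms by (simp add: finite_measure.emeasure_finite)
  ultimately show ?thesis
    unfolding cond_nn_exp_def
    by (simp add: ennreal_times_divide mult.commute[of "emeasure M A"] ennreal_mult_divide_eq)
qed

section \<open>Cut points of the random map\<close>

lemma cut_point_jump_map: "cut_point (jump_map a w) x \<longleftrightarrow> (\<forall>y<x. y + int (a y w) \<le> x)"
  by (simp add: cut_point_def jump_map_def)

locale iid_jumps = prob_space M for M :: "'w measure" +
  fixes a :: "int \<Rightarrow> 'w \<Rightarrow> nat"
  assumes a_meas[measurable]: "\<And>n. a n \<in> measurable M (count_space UNIV)"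
    and a_indep: "indep_vars (\<lambda>_. count_space UNIV) a UNIV"
    and a_ident: "\<And>n. distr M (count_space UNIV) (a n) = distr M (count_space UNIV) (a 0)"
    and a_int: "integrable M (\<lambda>w. real (a 0 w))"
    and p1_pos: "0 < prob {w \<in> space M. a 0 w = 1}"
begin

lemma pred_cut_point[measurable]: "Measurable.pred M (\<lambda>w. cut_point (jump_map a w) x)"
proof -
  have "cut_point (jump_map a w) x \<longleftrightarrow> (\<forall>y. y < x \<longrightarrow> a y w \<le> nat (x - y))" for w
    unfolding cut_point_jump_map by (intro all_cong1 imp_cong refl) linarith
  then show ?thesis by simp
qed

definition jump_tail :: "nat \<Rightarrow> real" where
  "jump_tail j = prob {w \<in> space M. j < a 0 w}"

lemma prob_jump_le: "prob {w \<in> space M. a y w \<le> j} = 1 - jump_tail j"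
proof -
  have "prob {w \<in> space M. a y w \<le> j} = measure (distr M (count_space UNIV) (a y)) {..j}"
    by (subst measure_distr) (auto intro!: arg_cong[where f=prob])
  also have "\<dots> = prob {w \<in> space M. a 0 w \<le> j}"
    by (subst a_ident, subst measure_distr) (auto intro!: arg_cong[where f=prob])
  also have "\<dots> = 1 - jump_tail j"
    unfolding jump_tail_def by (subst prob_compl[symmetric]) (auto intro!: arg_cong[where f=prob])
  finally show ?thesis .
qed

lemma summable_jump_tail: "summable jump_tail"
proof -
  have "(\<integral>\<^sup>+w. of_nat (a 0 w) \<partial>M) = (\<Sum>j. emeasure M {w \<in> space M. j < a 0 w})"
    by (rule nn_integral_nat_function) simp
  moreover have "(\<integral>\<^sup>+w. of_nat (a 0 w) \<partial>M) < \<infinity>"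
    using integrableD(2)[OF a_int] by (simp add: ennreal_of_nat_eq_real_of_nat less_top)
  ultimately have "(\<Sum>j. ennreal (jump_tail j)) \<noteq> top"
    by (simp add: jump_tail_def emeasure_eq_measure)
  then show ?thesis
    by (rule summable_suminf_not_top[rotated]) (simp add: jump_tail_def)
qed

lemma jump_tail_Suc_less_1: "jump_tail (Suc j) < 1"
proof -
  have "prob {w \<in> space M. a 0 w = 1} \<le> prob {w \<in> space M. a 0 w \<le> Suc j}"
    by (intro finite_measure_mono) auto
  then show ?thesis using p1_pos prob_jump_le[of 0 "Suc j"] by linarith
qed

definition cut_window :: "int \<Rightarrow> nat \<Rightarrow> 'w set" where
  "cut_window x J = {w \<in> space M. \<forall>y. x - int J \<le> y \<and> y < x \<longrightarrow> y + int (a y w) \<le> x}"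

lemma cut_window_nat: "cut_window x J = {w \<in> space M. \<forall>y\<in>{x - int J..<x}. a y w \<le> nat (x - y)}"
  unfolding cut_window_def atLeastLessThan_iff Ball_def
  by (intro Collect_cong conj_cong refl all_cong imp_cong) (auto simp: le_nat_iff)

lemma cut_window_events[measurable]: "cut_window x J \<in> events"
  unfolding cut_window_nat by measurable

lemma prob_cut_window: "prob (cut_window x J) = (\<Prod>j<J. 1 - jump_tail (Suc j))"
proof (cases "J = 0")
  case True
  then show ?thesis by (simp add: cut_window_def prob_space)
next
  case False
  let ?Y = "{x - int J..<x}"
  have "cut_window x J = (\<Inter>y\<in>?Y. a y -` {..nat (x - y)} \<inter> space M)"
    using False by (auto simp: cut_window_nat)
  then have "prob (cut_window x J) = (\<Prod>y\<in>?Y. prob (a y -` {..nat (x - y)} \<inter> space M))"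
    using indep_varsD[OF a_indep, of ?Y] False by simp
  also have "\<dots> = (\<Prod>y\<in>?Y. 1 - jump_tail (nat (x - y)))"
  proof (intro prod.cong refl)
    fix y
    have "a y -` {..nat (x - y)} \<inter> space M = {w \<in> space M. a y w \<le> nat (x - y)}"
      by auto
    then show "prob (a y -` {..nat (x - y)} \<inter> space M) = 1 - jump_tail (nat (x - y))"
      by (simp add: prob_jump_le)
  qed
  also have "\<dots> = (\<Prod>j<J. 1 - jump_tail (Suc j))"
    by (rule prod.reindex_bij_witness[where j="\<lambda>y. nat (x - y - 1)" and i="\<lambda>j. x - int j - 1"])
      (auto simp: Suc_nat_eq_nat_zadd1)
  finally show ?thesis .
qed

text \<open>The probability is the infinite product of the P[a_0 \<le> j], j \<ge> 1: it stays positive because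
  the P[a_0 > j] are summable (their sum is E[a_0] - 1) and each factor is at least P[a_0 = 1] > 0.\<close>
lemma prob_cut_point_lower_bound: "\<exists>\<delta>>0. \<forall>x. \<delta> \<le> prob {w \<in> space M. cut_point (jump_map a w) x}"
proof -
  have "\<exists>\<delta>>0. \<forall>\<^sub>F J in sequentially. \<delta> \<le> (\<Prod>j<J. 1 - jump_tail (Suc j))"
  proof (rule prod_one_minus_eventually_bounded_below)
    show "summable (\<lambda>j. jump_tail (Suc j))"
      using summable_jump_tail by (simp only: summable_Suc_iff)
  next
    show "0 \<le> jump_tail (Suc j)" for j
      by (simp add: jump_tail_def)
  qed (rule jump_tail_Suc_less_1)
  then obtain \<delta> where "0 < \<delta>" and \<delta>: "\<forall>\<^sub>F J in sequentially. \<delta> \<le> (\<Prod>j<J. 1 - jump_tail (Suc j))"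
    by blast
  have "\<delta> \<le> prob {w \<in> space M. cut_point (jump_map a w) x}" for x
  proof (rule tendsto_lowerbound)
    have "{w \<in> space M. cut_point (jump_map a w) x} = (\<Inter>J. cut_window x J)"
    proof (intro set_eqI iffI)
      fix w assume w: "w \<in> (\<Inter>J. cut_window x J)"
      have "y + int (a y w) \<le> x" if "y < x" for y
        using w[THEN INT_D, of "nat (x - y)"] that by (simp add: cut_window_def)
      with w show "w \<in> {w \<in> space M. cut_point (jump_map a w) x}"
        by (auto simp: cut_window_def cut_point_jump_map)
    qed (auto simp: cut_window_def cut_point_jump_map)
    moreover have "decseq (cut_window x)"
      by (auto simp: decseq_def cut_window_def)
    then have "(\<lambda>J. prob (cut_window x J)) \<longlonglongrightarrow> prob (\<Inter>J. cut_window x J)"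
      by (intro finite_Lim_measure_decseq) auto
    ultimately show "(\<lambda>J. prob (cut_window x J)) \<longlonglongrightarrow> prob {w \<in> space M. cut_point (jump_map a w) x}"
      by simp
    show "\<forall>\<^sub>F J in sequentially. \<delta> \<le> prob (cut_window x J)"
      using \<delta> by (simp add: prob_cut_window)
  qed simp
  with \<open>0 < \<delta>\<close> show ?thesis by blast
qed

definition far_jump_events :: "nat \<Rightarrow> 'w set set" where
  "far_jump_events K = {a y -` B \<inter> space M | y B. int K \<le> \<bar>y\<bar>}"

definition jump_sigma :: "int \<Rightarrow> 'w set set" where
  "jump_sigma y = sigma_sets (space M) {a y -` B \<inter> space M | B. B \<in> sets (count_space UNIV)}"

text \<open>The zero-one law is stated for families indexed by nat, so the jumps are re-indexed by
  int_decode.\<close>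
lemma indep_sets_jump_sigma_int_decode: "indep_sets (\<lambda>i. jump_sigma (int_decode i)) UNIV"
proof (rule indep_setsI)
  have indep: "indep_sets jump_sigma UNIV"
    using a_indep unfolding indep_vars_def jump_sigma_def by blast
  then show "jump_sigma (int_decode i) \<subseteq> events" for i
    unfolding indep_sets_def by auto
  fix B J assume J: "J \<noteq> {}" "J \<subseteq> (UNIV::nat set)" "finite J" "\<forall>j\<in>J. B j \<in> jump_sigma (int_decode j)"
  have "prob (\<Inter>y\<in>int_decode ` J. B (int_encode y)) = (\<Prod>y\<in>int_decode ` J. prob (B (int_encode y)))"
    using J by (intro indep_setsD[OF indep]) auto
  moreover have "(\<Inter>y\<in>int_decode ` J. B (int_encode y)) = (\<Inter>j\<in>J. B j)"
    by auto
  moreover have "(\<Prod>y\<in>int_decode ` J. prob (B (int_encode y))) = (\<Prod>j\<in>J. prob (B j))"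
    by (subst prod.reindex) (auto simp: inj_on_def int_decode_eq)
  ultimately show "prob (\<Inter>j\<in>J. B j) = (\<Prod>j\<in>J. prob (B j))"
    by simp
qed

lemma far_jump_events_late_codes:
  "far_jump_events (Suc (\<Sum>i<n. nat \<bar>int_decode i\<bar>)) \<subseteq> (\<Union>i\<in>{n..}. jump_sigma (int_decode i))"
proof
  fix S assume "S \<in> far_jump_events (Suc (\<Sum>i<n. nat \<bar>int_decode i\<bar>))"
  then obtain y B where S: "S = a y -` B \<inter> space M" "Suc (\<Sum>i<n. nat \<bar>int_decode i\<bar>) \<le> \<bar>y\<bar>"
    by (auto simp: far_jump_events_def)
  have "n \<le> int_encode y"
  proof (rule ccontr)
    assume "\<not> ?thesis"
    then have "nat \<bar>int_decode (int_encode y)\<bar> \<le> (\<Sum>i<n. nat \<bar>int_decode i\<bar>)"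
      by (intro member_le_sum) auto
    moreover have "int (nat \<bar>y\<bar>) = \<bar>y\<bar>" by simp
    ultimately show False using S(2) by simp
  qed
  moreover have "S \<in> jump_sigma (int_decode (int_encode y))"
    unfolding jump_sigma_def using S by (intro sigma_sets.Basic) auto
  ultimately show "S \<in> (\<Union>i\<in>{n..}. jump_sigma (int_decode i))"
    by (intro UN_I[of "int_encode y"]) auto
qed

lemma tail_event_zero_one:
  assumes "\<And>K. X \<in> sigma_sets (space M) (far_jump_events K)"
  shows "prob X = 0 \<or> prob X = 1"
proof (rule kolmogorov_0_1_law[OF _ indep_sets_jump_sigma_int_decode])
  show "sigma_algebra (space M) (jump_sigma (int_decode i))" for i
    unfolding jump_sigma_def by (rule sigma_algebra_sigma_sets) auto
  show "X \<in> tail_events (\<lambda>i. jump_sigma (int_decode i))"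
    unfolding tail_events_def
    using assms sigma_sets_subseteq[OF far_jump_events_late_codes] by blast
qed

definition cuts_along :: "(nat \<Rightarrow> int set) \<Rightarrow> 'w set" where
  "cuts_along Q = {w \<in> space M. \<forall>N. \<exists>x\<in>Q N. cut_point (jump_map a w) x}"

lemma cuts_along_ignoring_near_jumps:
  assumes Q: "\<And>N d. Q (N + d) \<subseteq> Q N \<inter> {x. int d < \<bar>x\<bar>}"
  shows "cuts_along Q = {w \<in> space M. \<forall>N. \<exists>x\<in>Q N. \<forall>y<x. int K \<le> \<bar>y\<bar> \<longrightarrow> y + int (a y w) \<le> x}"
proof (intro set_eqI iffI)
  fix w assume "w \<in> cuts_along Q"
  then show "w \<in> {w \<in> space M. \<forall>N. \<exists>x\<in>Q N. \<forall>y<x. int K \<le> \<bar>y\<bar> \<longrightarrow> y + int (a y w) \<le> x}"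
    by (fastforce simp: cuts_along_def cut_point_jump_map)
next
  fix w assume w: "w \<in> {w \<in> space M. \<forall>N. \<exists>x\<in>Q N. \<forall>y<x. int K \<le> \<bar>y\<bar> \<longrightarrow> y + int (a y w) \<le> x}"
  define B where "B = (\<Sum>z\<in>{-int K..int K}. \<bar>z + int (a z w)\<bar>)"
  have B: "y + int (a y w) \<le> B" if "\<bar>y\<bar> < int K" for y
    using that member_le_sum[of y "{-int K..int K}" "\<lambda>z. \<bar>z + int (a z w)\<bar>"]
    unfolding B_def by fastforce
  text \<open>Far from the origin, the finitely many near jumps cannot jump over x.\<close>
  have "\<exists>x\<in>Q N. cut_point (jump_map a w) x" for N
  proof -
    define d where "d = nat (max (int K) B)"
    obtain x where x: "x \<in> Q (N + d)" "\<forall>y<x. int K \<le> \<bar>y\<bar> \<longrightarrow> y + int (a y w) \<le> x"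
      using w by blast
    have "x \<in> Q N" "int d < \<bar>x\<bar>"
      using Q x(1) by auto
    moreover have "y + int (a y w) \<le> x" if "y < x" for y
    proof (cases "int K \<le> \<bar>y\<bar>")
      case False
      then have "0 < x"
        using that \<open>int d < \<bar>x\<bar>\<close> unfolding d_def by linarith
      moreover have "y + int (a y w) \<le> B"
        using B False by simp
      ultimately show ?thesis
        using \<open>int d < \<bar>x\<bar>\<close> unfolding d_def by linarith
    qed (use x(2) that in auto)
    ultimately show ?thesis
      by (auto simp: cut_point_jump_map)
  qed
  with w show "w \<in> cuts_along Q"
    by (simp add: cuts_along_def)
qed

lemma far_jump_sigma:
  "space (sigma (space M) (far_jump_events K)) = space M"
  "sets (sigma (space M) (far_jump_events K)) = sigma_sets (space M) (far_jump_events K)"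
proof -
  have "far_jump_events K \<subseteq> Pow (space M)"
    by (auto simp: far_jump_events_def)
  then show "space (sigma (space M) (far_jump_events K)) = space M"
    and "sets (sigma (space M) (far_jump_events K)) = sigma_sets (space M) (far_jump_events K)"
    by (simp_all add: space_measure_of_conv sets_measure_of)
qed

lemma far_jump_measurable:
  "(\<lambda>w. if int K \<le> \<bar>y\<bar> then a y w else 0)
    \<in> measurable (sigma (space M) (far_jump_events K)) (count_space UNIV)"
proof (cases "int K \<le> \<bar>y\<bar>")
  case True
  then have "a y -` B \<inter> space M \<in> far_jump_events K" for B
    by (auto simp: far_jump_events_def)
  with True show ?thesis
    by (auto simp: measurable_def far_jump_sigma)
qed simp

lemma cuts_along_tail_event:
  assumes "\<And>N d. Q (N + d) \<subseteq> Q N \<inter> {x. int d < \<bar>x\<bar>}"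
  shows "cuts_along Q \<in> sigma_sets (space M) (far_jump_events K)"
proof -
  define a' where "a' y w = (if int K \<le> \<bar>y\<bar> then a y w else 0)" for y w
  have [measurable]: "a' y \<in> measurable (sigma (space M) (far_jump_events K)) (count_space UNIV)"
    for y
    unfolding a'_def by (rule far_jump_measurable)
  have "{w \<in> space (sigma (space M) (far_jump_events K)).
      \<forall>N. \<exists>x\<in>Q N. \<forall>y<x. int K \<le> \<bar>y\<bar> \<longrightarrow> a' y w \<le> nat (x - y)}
    \<in> sets (sigma (space M) (far_jump_events K))"
    by measurable
  moreover have "(\<forall>y<x. int K \<le> \<bar>y\<bar> \<longrightarrow> a' y w \<le> nat (x - y))
      \<longleftrightarrow> (\<forall>y<x. int K \<le> \<bar>y\<bar> \<longrightarrow> y + int (a y w) \<le> x)" for x w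
    by (intro all_cong1 imp_cong refl) (auto simp: a'_def le_nat_iff)
  ultimately show ?thesis
    by (simp add: cuts_along_ignoring_near_jumps[OF assms, of K] far_jump_sigma)
qed

lemma prob_cuts_along:
  assumes far: "\<And>N d. Q (N + d) \<subseteq> Q N \<inter> {x. int d < \<bar>x\<bar>}" and nonempty: "\<And>N. Q N \<noteq> {}"
  shows "prob (cuts_along Q) = 1"
proof -
  obtain \<delta> where "0 < \<delta>" and \<delta>: "\<And>x. \<delta> \<le> prob {w \<in> space M. cut_point (jump_map a w) x}"
    using prob_cut_point_lower_bound by blast
  define U where "U N = {w \<in> space M. \<exists>x\<in>Q N. cut_point (jump_map a w) x}" for N
  have lower: "\<delta> \<le> prob (U N)" for N
  proof -
    obtain x where "x \<in> Q N" using nonempty by blast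
    then have "prob {w \<in> space M. cut_point (jump_map a w) x} \<le> prob (U N)"
      by (intro finite_measure_mono) (auto simp: U_def)
    then show ?thesis using \<delta>[of x] by linarith
  qed
  have "decseq U"
    using far[of _ 1] by (force simp: decseq_Suc_iff U_def)
  moreover have "U N \<in> events" for N
    unfolding U_def by measurable
  ultimately have "(\<lambda>N. prob (U N)) \<longlonglongrightarrow> prob (\<Inter>N. U N)"
    by (intro finite_Lim_measure_decseq) auto
  moreover have "(\<Inter>N. U N) = cuts_along Q"
    by (auto simp: U_def cuts_along_def)
  ultimately have "\<delta> \<le> prob (cuts_along Q)"
    using lower by (simp add: LIMSEQ_le_const)
  moreover have "prob (cuts_along Q) = 0 \<or> prob (cuts_along Q) = 1"
    using cuts_along_tail_event[OF far] by (rule tail_event_zero_one)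
  ultimately show ?thesis
    using \<open>0 < \<delta>\<close> by auto
qed

lemma AE_cut_points_unbounded:
  "AE w in M. (\<forall>N. \<exists>x>N. cut_point (jump_map a w) x) \<and> (\<forall>N. \<exists>x<N. cut_point (jump_map a w) x)"
proof -
  have "prob (cuts_along (\<lambda>N. {int N<..})) = 1" "prob (cuts_along (\<lambda>N. {..< - int N})) = 1"
    by (auto intro!: prob_cuts_along)
  moreover have "cuts_along Q \<in> events" for Q
    unfolding cuts_along_def by measurable
  ultimately have "AE w in M. w \<in> cuts_along (\<lambda>N. {int N<..})"
    and "AE w in M. w \<in> cuts_along (\<lambda>N. {..< - int N})"
    by (simp_all add: prob_eq_1)
  then show ?thesis
  proof eventually_elim
    case (elim w)
    show ?case
    proof (intro conjI allI)
      fix N :: int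
      obtain x where "x \<in> {int (nat N)<..}" "cut_point (jump_map a w) x"
        using elim(1) unfolding cuts_along_def by blast
      then show "\<exists>x>N. cut_point (jump_map a w) x"
        by (intro exI[of _ x]) (auto split: if_splits)
    next
      fix N :: int
      obtain x where "x \<in> {..< - int (nat (- N))}" "cut_point (jump_map a w) x"
        using elim(2) unfolding cuts_along_def by blast
      then show "\<exists>x<N. cut_point (jump_map a w) x"
        by (intro exI[of _ x]) (auto split: if_splits)
    qed
  qed
qed

end

section \<open>Mass transport from successful integers\<close>

lemma funpow_shift:
  fixes f :: "int \<Rightarrow> int"
  shows "((\<lambda>x. f (x + k) - k) ^^ j) n = (f ^^ j) (n + k) - k"
  by (induction j) auto

lemma desc_shift:
  fixes f :: "int \<Rightarrow> int"
  shows "m \<in> desc (\<lambda>x. f (x + k) - k) n \<longleftrightarrow> m + k \<in> desc f (n + k)"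
  unfolding desc_def funpow_shift by (auto simp: algebra_simps)

lemma successful_shift:
  fixes f :: "int \<Rightarrow> int"
  shows "n \<in> successful (\<lambda>x. f (x + k) - k) \<longleftrightarrow> n + k \<in> successful f"
proof -
  have "desc (\<lambda>x. f (x + k) - k) n = (\<lambda>m. m - k) ` desc f (n + k)"
    using desc_shift by (force simp: image_iff)
  then show ?thesis
    unfolding successful_def by (simp add: finite_image_iff inj_on_def)
qed

lemma ephemeral_shift:
  fixes f :: "int \<Rightarrow> int"
  shows "n \<in> ephemeral (\<lambda>x. f (x + k) - k) \<longleftrightarrow> n + k \<in> ephemeral f"
  using successful_shift by (simp add: ephemeral_def successful_def)

lemma dir_eph_tilde_shift:
  fixes f :: "int \<Rightarrow> int"
  shows "m \<in> dir_eph_tilde (\<lambda>x. f (x + k) - k) n \<longleftrightarrow> m + k \<in> dir_eph_tilde f (n + k)"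
  unfolding dir_eph_tilde_def dir_eph_def
  by (auto simp: desc_shift ephemeral_shift successful_shift funpow_shift)

lemma cousins_shift:
  fixes f :: "int \<Rightarrow> int"
  shows "m \<in> cousins (\<lambda>x. f (x + k) - k) n \<longleftrightarrow> m + k \<in> cousins f (n + k)"
  unfolding cousins_def funpow_shift by auto

locale stationary_jumps = iid_jumps M a for M :: "'w measure" and a +
  fixes \<theta> :: "int \<Rightarrow> 'w \<Rightarrow> 'w"
  assumes theta_meas: "\<And>n. \<theta> n \<in> measurable M M"
    and theta_pres: "\<And>n. distr M M (\<theta> n) = M"
    and a_pos: "\<And>n w. w \<in> space M \<Longrightarrow> 1 \<le> a n w"
    and a_flow: "\<And>n k w. w \<in> space M \<Longrightarrow> a n (\<theta> k w) = a (n + k) w"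
begin

abbreviation F :: "'w \<Rightarrow> int \<Rightarrow> int" where
  "F w \<equiv> jump_map a w"

lemma forward_map_jump_map:
  assumes "w \<in> space M"
  shows "forward_map (F w)"
proof
  show "n < F w n" for n
    using a_pos[OF assms, of n] by (simp add: jump_map_def)
qed

lemma jump_map_shift: "w \<in> space M \<Longrightarrow> F (\<theta> k w) = (\<lambda>n. F w (n + k) - k)"
  by (auto simp: jump_map_def a_flow)

lemma funpow_jump_map_measurable[measurable]: "(\<lambda>w. (F w ^^ j) m) \<in> measurable M (count_space UNIV)"
proof (induction j)
  case (Suc j)
  have "(\<lambda>w. (\<lambda>i w. i + int (a i w)) ((F w ^^ j) m) w) \<in> measurable M (count_space UNIV)"
    by (rule measurable_compose_countable'[OF _ Suc]) auto
  then show ?case by (simp add: jump_map_def)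
qed simp

lemma pred_successful[measurable]: "Measurable.pred M (\<lambda>w. m \<in> successful (F w))"
proof -
  have "m \<in> successful (F w) \<longleftrightarrow> (\<forall>N. \<exists>y. y < N \<and> (\<exists>j. (F w ^^ j) y = m))" if "w \<in> space M" for w
    unfolding forward_map.successful_iff_unbounded[OF forward_map_jump_map[OF that]] desc_def
    by blast
  then have "Measurable.pred M (\<lambda>w. m \<in> successful (F w)) \<longleftrightarrow>
      Measurable.pred M (\<lambda>w. \<forall>N. \<exists>y. y < N \<and> (\<exists>j. (F w ^^ j) y = m))"
    by (rule measurable_cong)
  also have "\<dots>"
    by measurable
  finally show ?thesis .
qed

lemma pred_dir_eph_tilde[measurable]: "Measurable.pred M (\<lambda>w. n \<in> dir_eph_tilde (F w) m)"
proof -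
  define L where "L w = (LEAST k. 0 < k \<and> (F w ^^ k) n \<in> successful (F w))" for w
  have [measurable]: "L \<in> measurable M (count_space UNIV)"
    unfolding L_def by measurable
  have "Measurable.pred M (\<lambda>w. (F w ^^ L w) n = m)"
    by (rule measurable_compose_countable'[where f="\<lambda>i w. (F w ^^ i) n = m" and g=L and I=UNIV])
      auto
  moreover have "n \<in> dir_eph_tilde (F w) m \<longleftrightarrow>
      n = m \<or> ((\<exists>j. (F w ^^ j) n = m) \<and> n \<notin> successful (F w) \<and> (F w ^^ L w) n = m)" for w
    by (auto simp: dir_eph_tilde_def dir_eph_def desc_def ephemeral_def successful_def L_def)
  ultimately show ?thesis
    by simp
qed

lemma pred_cousins[measurable]: "Measurable.pred M (\<lambda>w. n \<in> cousins (F w) m)"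
  unfolding cousins_def by measurable

definition origin_successful :: "'w set" where
  "origin_successful = {w \<in> space M. 0 \<in> successful (F w)}"

definition origin_ephemeral :: "'w set" where
  "origin_ephemeral = {w \<in> space M. 0 \<in> ephemeral (F w)}"

lemma origin_successful_sets[measurable]: "origin_successful \<in> sets M"
  unfolding origin_successful_def by measurable

lemma origin_ephemeral_eq: "origin_ephemeral = space M - origin_successful"
  by (auto simp: origin_successful_def origin_ephemeral_def ephemeral_def successful_def)

lemma origin_ephemeral_sets[measurable]: "origin_ephemeral \<in> sets M"
  unfolding origin_ephemeral_eq by measurable

definition transport ::
  "((int \<Rightarrow> int) \<Rightarrow> int \<Rightarrow> int set) \<Rightarrow> ('w \<Rightarrow> int \<Rightarrow> int \<Rightarrow> real) \<Rightarrow> 'w \<Rightarrow> int \<Rightarrow> int \<Rightarrow> ennreal"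
  where "transport R g w m n =
    (if m \<in> successful (F w) \<and> n \<in> R (F w) m then ennreal (g w m n) else 0)"

lemma transport_sent:
  assumes "w \<in> space M"
  shows "(\<integral>\<^sup>+n. transport R g w 0 n \<partial>count_space UNIV)
    = (\<integral>\<^sup>+n. ennreal (g w 0 n) \<partial>count_space (R (F w) 0)) * indicator origin_successful w"
  using assms
  by (auto simp: transport_def origin_successful_def nn_integral_count_space_indicator indicator_def
      intro!: nn_integral_cong)

lemma transport_received:
  assumes "\<And>m. m \<in> successful (F w) \<and> 0 \<in> R (F w) m \<longleftrightarrow> m = c"
  shows "(\<integral>\<^sup>+m. transport R g w m 0 \<partial>count_space UNIV) = ennreal (g w c 0)"
proof -
  have "(\<integral>\<^sup>+m. transport R g w m 0 \<partial>count_space UNIV)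
      = (\<integral>\<^sup>+m. ennreal (g w m 0) * indicator {c} m \<partial>count_space UNIV)"
    using assms by (intro nn_integral_cong) (simp add: transport_def indicator_def)
  then show ?thesis by simp
qed

lemma successful_ancestor_transport:
  fixes R :: "(int \<Rightarrow> int) \<Rightarrow> int \<Rightarrow> int set" and g :: "'w \<Rightarrow> int \<Rightarrow> int \<Rightarrow> real"
    and anc :: "'w \<Rightarrow> int"
  assumes R_shift: "\<And>f k m n. n \<in> R (\<lambda>x. f (x + k) - k) m \<longleftrightarrow> n + k \<in> R f (m + k)"
    and R_meas[measurable]: "\<And>m n. Measurable.pred M (\<lambda>w. n \<in> R (F w) m)"
    and g_meas[measurable]: "\<And>m n. (\<lambda>w. g w m n) \<in> borel_measurable M"
    and g_diag: "\<And>k m n w. w \<in> space M \<Longrightarrow> g (\<theta> k w) m n = g w (m + k) (n + k)"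
    and ancestor: "AE w in M. \<forall>m. m \<in> successful (F w) \<and> 0 \<in> R (F w) m \<longleftrightarrow>
      m = (if 0 \<in> successful (F w) then 0 else anc w)"
  shows "(\<integral>\<^sup>+w. (\<integral>\<^sup>+n. ennreal (g w 0 n) \<partial>count_space (R (F w) 0)) * indicator origin_successful w \<partial>M)
    = (\<integral>\<^sup>+w. ennreal (g w 0 0) * indicator origin_successful w \<partial>M)
      + (\<integral>\<^sup>+w. ennreal (g w (anc w) 0) * indicator origin_ephemeral w \<partial>M)"
proof -
  have transport_meas: "(\<lambda>w. transport R g w m n) \<in> borel_measurable M" for m n
    unfolding transport_def by measurable
  have transport_diag: "transport R g (\<theta> k w) m n = transport R g w (m + k) (n + k)"
    if "w \<in> space M" for k m n w
    using that by (simp add: transport_def jump_map_shift successful_shift R_shift g_diag)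
  let ?received = "\<lambda>w. \<integral>\<^sup>+m. transport R g w m 0 \<partial>count_space UNIV"
  have [measurable]: "?received \<in> borel_measurable M"
    by (rule borel_measurable_nn_integral_count_space_int[OF transport_meas])
  have received:
    "AE w in M. ?received w = ennreal (g w (if 0 \<in> successful (F w) then 0 else anc w) 0)"
    using ancestor by eventually_elim (rule transport_received, blast)
  have "(\<integral>\<^sup>+w. (\<integral>\<^sup>+n. ennreal (g w 0 n) \<partial>count_space (R (F w) 0)) * indicator origin_successful w \<partial>M)
      = (\<integral>\<^sup>+w. (\<integral>\<^sup>+n. transport R g w 0 n \<partial>count_space UNIV) \<partial>M)"
    by (intro nn_integral_cong) (simp add: transport_sent)
  also have "\<dots> = (\<integral>\<^sup>+w. ?received w \<partial>M)"
    by (rule mass_transport[where h="transport R g" and \<theta>=\<theta>,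
          OF theta_meas theta_pres transport_meas transport_diag])
  also have "\<dots> = (\<integral>\<^sup>+w. ?received w * indicator origin_successful w
      + ?received w * indicator origin_ephemeral w \<partial>M)"
    by (intro nn_integral_cong) (auto simp: origin_ephemeral_eq indicator_def)
  also have "\<dots> = (\<integral>\<^sup>+w. ?received w * indicator origin_successful w \<partial>M)
      + (\<integral>\<^sup>+w. ?received w * indicator origin_ephemeral w \<partial>M)"
    by (rule nn_integral_add) measurable
  also have "(\<integral>\<^sup>+w. ?received w * indicator origin_successful w \<partial>M)
      = (\<integral>\<^sup>+w. ennreal (g w 0 0) * indicator origin_successful w \<partial>M)"
    using received by (intro nn_integral_cong_AE) (auto simp: origin_successful_def indicator_def)
  also have "(\<integral>\<^sup>+w. ?received w * indicator origin_ephemeral w \<partial>M)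
      = (\<integral>\<^sup>+w. ennreal (g w (anc w) 0) * indicator origin_ephemeral w \<partial>M)"
    using received by (intro nn_integral_cong_AE)
      (auto simp: origin_ephemeral_def ephemeral_def successful_def indicator_def)
  finally show ?thesis .
qed

lemma AE_dir_eph_tilde_ancestor:
  "AE w in M. \<forall>m. m \<in> successful (F w) \<and> 0 \<in> dir_eph_tilde (F w) m \<longleftrightarrow>
    m = (if 0 \<in> successful (F w) then 0 else n_d (F w))"
  using AE_cut_points_unbounded AE_space
proof eventually_elim
  case (elim w)
  then obtain x where "0 < x" "cut_point (F w) x" by blast
  then show ?case
    using forward_map.dir_eph_tilde_ancestor[OF forward_map_jump_map[OF elim(2)]] by blast
qed

lemma AE_cousins_ancestor:
  "AE w in M. \<forall>m. m \<in> successful (F w) \<and> 0 \<in> cousins (F w) m \<longleftrightarrow>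
    m = (if 0 \<in> successful (F w) then 0 else n_l (F w))"
  using AE_cut_points_unbounded AE_space
proof eventually_elim
  case (elim w)
  then obtain x where "0 < x" "cut_point (F w) x" by blast
  then show ?case
    using forward_map.cousins_ancestor[OF forward_map_jump_map[OF elim(2)]] elim(1) by blast
qed

end

theorem mainTheorem10:
  fixes M :: "'w measure" and \<theta> :: "int \<Rightarrow> 'w \<Rightarrow> 'w"
    and a :: "int \<Rightarrow> 'w \<Rightarrow> nat" and g :: "'w \<Rightarrow> int \<Rightarrow> int \<Rightarrow> real"
  assumes prob: "prob_space M"
    and theta_meas: "\<And>n. \<theta> n \<in> measurable M M"
    and theta_bij: "\<And>n. bij_betw (\<theta> n) (space M) (space M)"
    and theta_zero: "\<And>w. w \<in> space M \<Longrightarrow> \<theta> 0 w = w"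
    and theta_add: "\<And>m n w. w \<in> space M \<Longrightarrow> \<theta> (m + n) w = \<theta> m (\<theta> n w)"
    and theta_pres: "\<And>n. distr M M (\<theta> n) = M"
    and a_meas: "\<And>n. a n \<in> measurable M (count_space UNIV)"
    and a_pos: "\<And>n w. w \<in> space M \<Longrightarrow> 1 \<le> a n w"
    and a_flow: "\<And>n k w. w \<in> space M \<Longrightarrow> a n (\<theta> k w) = a (n + k) w"
    and a_indep: "prob_space.indep_vars M (\<lambda>_. count_space UNIV) a UNIV"
    and a_ident: "\<And>n. distr M (count_space UNIV) (a n) = distr M (count_space UNIV) (a 0)"
    and a_int: "integrable M (\<lambda>w. real (a 0 w))"
    and p1_pos: "0 < measure M {w \<in> space M. a 0 w = 1}"
    and p1_lt1: "measure M {w \<in> space M. a 0 w = 1} < 1"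
    and g_meas: "\<And>m n. (\<lambda>w. g w m n) \<in> borel_measurable M"
    and g_nonneg: "\<And>w m n. w \<in> space M \<Longrightarrow> 0 \<le> g w m n"
    and g_diag: "\<And>k m n w. w \<in> space M \<Longrightarrow> g (\<theta> k w) m n = g w (m + k) (n + k)"
  defines "S \<equiv> {w \<in> space M. 0 \<in> successful (jump_map a w)}"
    and "E \<equiv> {w \<in> space M. 0 \<in> ephemeral (jump_map a w)}"
  shows "(emeasure M S * cond_nn_exp M S
           (\<lambda>w. \<integral>\<^sup>+ n. ennreal (g w 0 n) \<partial>count_space (dir_eph_tilde (jump_map a w) 0))
         = emeasure M S * cond_nn_exp M S (\<lambda>w. ennreal (g w 0 0))
           + emeasure M E * cond_nn_exp M E (\<lambda>w. ennreal (g w (n_d (jump_map a w)) 0)))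
     \<and> (emeasure M S * cond_nn_exp M S
           (\<lambda>w. \<integral>\<^sup>+ n. ennreal (g w 0 n) \<partial>count_space (cousins (jump_map a w) 0))
         = emeasure M S * cond_nn_exp M S (\<lambda>w. ennreal (g w 0 0))
           + emeasure M E * cond_nn_exp M E (\<lambda>w. ennreal (g w (n_l (jump_map a w)) 0)))"
proof -
  interpret prob_space M by (rule prob)
  interpret stationary_jumps M a \<theta>
    using a_meas a_indep a_ident a_int p1_pos theta_meas theta_pres a_pos a_flow
    by unfold_locales auto
  have S: "S = origin_successful" and E: "E = origin_ephemeral"
    by (simp_all add: S_def E_def origin_successful_def origin_ephemeral_def)
  note cond = emeasure_mult_cond_nn_exp[OF finite_measure_axioms]
  show ?thesis
    unfolding S E cond[OF origin_successful_sets] cond[OF origin_ephemeral_sets]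
    using successful_ancestor_transport[where R=dir_eph_tilde and g=g,
        OF dir_eph_tilde_shift pred_dir_eph_tilde g_meas g_diag AE_dir_eph_tilde_ancestor]
      successful_ancestor_transport[where R=cousins and g=g,
        OF cousins_shift pred_cousins g_meas g_diag AE_cousins_ancestor]
    by simp
qed

end
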